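(* Let $u \in \mathbb{N}$ and let $\mathrm{HFS}_u$ denote the universe of hereditarily finite sets with urelements $0,1,\dots,u-1$. Define $f_u : \mathrm{HFS}_u \to \mathbb{N}$ recursively by $f_u(x) = x$ if $x$ is an urelement (i.e. $x \in \{0,\dots,u-1\}$), and $f_u(x) = u + \sum_{a \in x} 2^{f_u(a)}$ if $x$ is a set. Then $f_u$ is a bijection between $\mathrm{HFS}_u$ and $\mathbb{N}$.
   Context: Urelements are objects having no elements, distinct from all sets; here the $u$ urelements are identified with the natural numbers $0,1,\dots,u-1$. $\mathrm{HFS}_u$ is the smallest collection containing these urelements and containing every finite set (possibly empty) all of whose elements belong to $\mathrm{HFS}_u$. For $u=0$ there are no urelements and $\mathrm{HFS}_0$ is the universe of pure hereditarily finite sets, with $f_0$ being Ackermann's encoding $f(x)=\sum_{a\in x}2^{f(a)}$ (so $f(\emptyset)=0$). $\mathbb{N}=\{0,1,2,\dots\}$. *)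

theory Defs
  imports Main "HOL-Library.FSet"
begin

datatype hfs = Ur nat | HSet "hfs fset"

inductive_set HFS :: "nat \<Rightarrow> hfs set" for u :: nat where
  ur: "n < u \<Longrightarrow> Ur n \<in> HFS u"
| set: "(\<forall>a. a |\<in>| A \<longrightarrow> a \<in> HFS u) \<Longrightarrow> HSet A \<in> HFS u"

lemma size_fmember_less: "x |\<in>| A \<Longrightarrow> size x < Suc (\<Sum>y\<in>fset A. Suc (size y))"
proof -
  assume "x |\<in>| A"
  then have "Suc (size x) \<le> (\<Sum>y\<in>fset A. Suc (size y))"
    by (intro member_le_sum) auto
  then show ?thesis by simp
qed

function f_enc :: "nat \<Rightarrow> hfs \<Rightarrow> nat" where
  "f_enc u (Ur n) = n"
| "f_enc u (HSet A) = u + (\<Sum>a\<in>fset A. 2 ^ f_enc u a)"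
  by pat_completeness auto
termination
  by (relation "measure (\<lambda>p. size (snd p))") (auto intro: size_fmember_less)

end

theory Submission imports Defs begin

text \<open>Every natural number is the sum of \<open>2 ^ k\<close> over a unique finite set of exponents, its
  binary digits. Hence a set \<open>x\<close> is coded by \<open>u\<close> plus the number whose binary digits are the
  codes of its elements, which are smaller than the code of \<open>x\<close>, and urelements take the
  codes below \<open>u\<close>. Injectivity and surjectivity then follow by strong induction on the code.\<close>

lemma bit_sum_power2_iff:
  assumes "finite S"
  shows "bit (\<Sum>k\<in>S. (2::nat) ^ k) n \<longleftrightarrow> n \<in> S"
  using assms
proof (induction S arbitrary: n rule: finite_induct)
  case empty
  then show ?case by simp
next
  case (insert x S)
  have "bit ((2::nat) ^ x + (\<Sum>k\<in>S. 2 ^ k)) n \<longleftrightarrow> bit ((2::nat) ^ x) n \<or> bit (\<Sum>k\<in>S. (2::nat) ^ k) n"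
    by (rule bit_disjunctive_add_iff) (use insert in \<open>auto simp: bit_exp_iff\<close>)
  with insert show ?case by (auto simp: bit_exp_iff)
qed

lemma sum_power2_inject:
  assumes "finite S" "finite T" "(\<Sum>k\<in>S. (2::nat) ^ k) = (\<Sum>k\<in>T. 2 ^ k)"
  shows "S = T"
proof (rule set_eqI)
  fix n
  show "n \<in> S \<longleftrightarrow> n \<in> T"
    using bit_sum_power2_iff[OF assms(1), of n] bit_sum_power2_iff[OF assms(2), of n] assms(3) by simp
qed

lemma sum_power2_bits: "(\<Sum>k\<in>{k. k < m \<and> bit m k}. (2::nat) ^ k) = m"
proof -
  have "m = take_bit m m"
    by (simp add: take_bit_nat_eq_self less_exp)
  also have "\<dots> = (\<Sum>k = 0..<m. push_bit k (of_bool (bit m k)))"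
    by (rule take_bit_sum)
  also have "\<dots> = (\<Sum>k\<in>{0..<m}. if bit m k then 2 ^ k else 0)"
    by (intro sum.cong) (auto simp: push_bit_eq_mult)
  also have "\<dots> = (\<Sum>k\<in>{0..<m} \<inter> {k. bit m k}. 2 ^ k)"
    by (simp add: sum.inter_restrict)
  also have "{0..<m} \<inter> {k. bit m k} = {k. k < m \<and> bit m k}"
    by auto
  finally show ?thesis by simp
qed

lemma f_enc_fmember_less: "a |\<in>| A \<Longrightarrow> f_enc u a < f_enc u (HSet A)"
proof -
  assume "a |\<in>| A"
  have "f_enc u a < 2 ^ f_enc u a" by (simp add: less_exp)
  also have "\<dots> \<le> (\<Sum>b\<in>fset A. 2 ^ f_enc u b)"
    using \<open>a |\<in>| A\<close> by (intro member_le_sum) auto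
  finally show ?thesis by simp
qed

lemma HSet_in_HFS_iff: "HSet A \<in> HFS u \<longleftrightarrow> fset A \<subseteq> HFS u"
  by (auto elim: HFS.cases intro: HFS.set)

lemma HSet_eq_if_f_enc_eq:
  assumes A: "HSet A \<in> HFS u" and B: "HSet B \<in> HFS u"
    and eq: "f_enc u (HSet A) = f_enc u (HSet B)"
    and inj: "inj_on (f_enc u) {x \<in> HFS u. f_enc u x < f_enc u (HSet A)}"
  shows "A = B"
proof -
  let ?D = "{x \<in> HFS u. f_enc u x < f_enc u (HSet A)}"
  have "fset A \<subseteq> ?D" "fset B \<subseteq> ?D"
    using A B f_enc_fmember_less[of _ A u] f_enc_fmember_less[of _ B u] eq
    by (auto simp: HSet_in_HFS_iff)
  with inj have "inj_on (f_enc u) (fset A)" "inj_on (f_enc u) (fset B)"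
    by (auto intro: inj_on_subset)
  with eq have "(\<Sum>k\<in>f_enc u ` fset A. (2::nat) ^ k) = (\<Sum>k\<in>f_enc u ` fset B. 2 ^ k)"
    by (simp add: sum.reindex)
  then have "f_enc u ` fset A = f_enc u ` fset B"
    by (rule sum_power2_inject[rotated 2]) auto
  with inj \<open>fset A \<subseteq> ?D\<close> \<open>fset B \<subseteq> ?D\<close> have "fset A = fset B"
    by (simp add: inj_on_image_eq_iff)
  then show ?thesis by (simp add: fset_inject)
qed

lemma inj_on_f_enc_below: "inj_on (f_enc u) {x \<in> HFS u. f_enc u x < n}"
proof (induction n)
  case 0
  then show ?case by simp
next
  case (Suc n)
  show ?case
  proof (rule inj_onI)
    fix x y
    assume x: "x \<in> {x \<in> HFS u. f_enc u x < Suc n}" and y: "y \<in> {x \<in> HFS u. f_enc u x < Suc n}"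
      and eq: "f_enc u x = f_enc u y"
    show "x = y"
    proof (cases "f_enc u x < n")
      case True
      with x y eq Suc.IH show ?thesis by (auto dest: inj_onD)
    next
      case False
      with x have n: "f_enc u x = n" by simp
      from x y eq consider (ur) m m' where "x = Ur m" "y = Ur m'"
        | (set) A B where "x = HSet A" "y = HSet B"
        by (cases x; cases y) (auto elim: HFS.cases)
      then show ?thesis
      proof cases
        case ur
        with eq show ?thesis by simp
      next
        case set
        with x y eq n Suc.IH show ?thesis
          using HSet_eq_if_f_enc_eq[of A u B] by simp
      qed
    qed
  qed
qed

lemma inj_on_f_enc: "inj_on (f_enc u) (HFS u)"
proof (rule inj_onI)
  fix x y
  assume "x \<in> HFS u" "y \<in> HFS u" "f_enc u x = f_enc u y"
  then show "x = y"
    using inj_on_f_enc_below[of u "Suc (f_enc u x)"] by (auto dest: inj_onD)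
qed

lemma f_enc_surj: "\<exists>x \<in> HFS u. f_enc u x = n"
proof (induction n rule: less_induct)
  case (less n)
  show ?case
  proof (cases "n < u")
    case True
    then show ?thesis by (intro bexI[of _ "Ur n"] HFS.ur) simp_all
  next
    case False
    define S where "S = {k. k < n - u \<and> bit (n - u) k}"
    have "\<forall>k\<in>S. \<exists>x \<in> HFS u. f_enc u x = k"
      using less False by (auto simp: S_def)
    then obtain g where g: "\<And>k. k \<in> S \<Longrightarrow> g k \<in> HFS u \<and> f_enc u (g k) = k"
      by metis
    define A where "A = Abs_fset (g ` S)"
    have fset_A: "fset A = g ` S"
      by (simp add: A_def S_def Abs_fset_inverse)
    have codes_A: "f_enc u ` fset A = S"
      using g by (force simp: fset_A)
    have "inj_on (f_enc u) (fset A)"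
      using g by (auto simp: fset_A intro: inj_onI)
    then have "f_enc u (HSet A) = u + (\<Sum>k\<in>f_enc u ` fset A. 2 ^ k)"
      by (simp add: sum.reindex)
    also have "\<dots> = u + (\<Sum>k\<in>S. 2 ^ k)"
      by (simp only: codes_A)
    also have "\<dots> = n"
      using False by (simp add: S_def sum_power2_bits)
    finally show ?thesis
      using g by (intro bexI[of _ "HSet A"]) (auto simp: HSet_in_HFS_iff fset_A)
  qed
qed

theorem mainTheorem1:
  fixes u :: nat
  shows "bij_betw (f_enc u) (HFS u) (UNIV :: nat set)"
  unfolding bij_betw_def
  using inj_on_f_enc f_enc_surj by (metis UNIV_eq_I image_iff)

end
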